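(* For every unweighted congestion game $\mathcal{G}$ with quadratic latency functions, $\mathrm{PoS}(\mathcal{G})\le 2.362$.
   Context: A weighted congestion game consists of a finite set $[n]=\{1,\dots,n\}$ of players, a finite set $E$ of resources, for each player $i$ a weight $w_i>0$ and a nonempty finite strategy set $\Sigma_i\subseteq 2^E$, and for each resource $e$ a latency function $\ell_e:\mathbb{R}_{\ge 0}\to\mathbb{R}_{\ge 0}$. It is unweighted if $w_i=1$ for all $i$. Quadratic latency functions means $\ell_e(x)=\sum_{j=0}^{2}\alpha_{e,j}x^j$ with all $\alpha_{e,j}\ge 0$. For a strategy profile $S=(s_1,\dots,s_n)$, the congestion of $e$ is $L_e(S)=\sum_{i:\,e\in s_i}w_i$, the cost of player $i$ is $c_i(S)=\sum_{e\in s_i}\ell_e(L_e(S))$, and $\mathrm{SUM}(S)=\sum_i c_i(S)$; $S^*$ minimizes $\mathrm{SUM}$. A pure Nash equilibrium (PNE) is a profile $S$ with $c_i(S)\le c_i(S_{-i}\diamond t)$ for all $i$ and $t\in\Sigma_i$, where $(S_{-i}\diamond t)$ replaces $s_i$ by $t$. $\mathrm{PoS}(\mathcal{G})=\min_{S\ \mathrm{PNE}}\mathrm{SUM}(S)/\mathrm{SUM}(S^* )$. *)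

theory Defs
  imports Main Complex_Main
begin

text \<open>A strategy profile is a function S from players to strategies
(only the values on 1..n matter).\<close>

definition congestion_game :: "nat \<Rightarrow> 'e set \<Rightarrow> (nat \<Rightarrow> 'e set set) \<Rightarrow> bool" where
  "congestion_game n E Strat \<longleftrightarrow> finite E \<and>
     (\<forall>i\<in>{1..n}. Strat i \<noteq> {} \<and> finite (Strat i) \<and> Strat i \<subseteq> Pow E)"

definition quadratic_latencies :: "'e set \<Rightarrow> ('e \<Rightarrow> real \<Rightarrow> real) \<Rightarrow> bool" where
  "quadratic_latencies E l \<longleftrightarrow>
     (\<forall>e\<in>E. \<exists>a0 a1 a2::real. a0 \<ge> 0 \<and> a1 \<ge> 0 \<and> a2 \<ge> 0 \<and>
        (\<forall>x\<ge>0. l e x = a0 + a1 * x + a2 * x ^ 2))"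

definition is_profile :: "nat \<Rightarrow> (nat \<Rightarrow> 'e set set) \<Rightarrow> (nat \<Rightarrow> 'e set) \<Rightarrow> bool" where
  "is_profile n Strat S \<longleftrightarrow> (\<forall>i\<in>{1..n}. S i \<in> Strat i)"

definition congestion :: "nat \<Rightarrow> (nat \<Rightarrow> 'e set) \<Rightarrow> 'e \<Rightarrow> real" where
  "congestion n S e = real (card {i\<in>{1..n}. e \<in> S i})"

definition player_cost :: "nat \<Rightarrow> ('e \<Rightarrow> real \<Rightarrow> real) \<Rightarrow> (nat \<Rightarrow> 'e set) \<Rightarrow> nat \<Rightarrow> real" where
  "player_cost n l S i = (\<Sum>e\<in>S i. l e (congestion n S e))"

definition social_cost :: "nat \<Rightarrow> ('e \<Rightarrow> real \<Rightarrow> real) \<Rightarrow> (nat \<Rightarrow> 'e set) \<Rightarrow> real" where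
  "social_cost n l S = (\<Sum>i\<in>{1..n}. player_cost n l S i)"

definition is_PNE :: "nat \<Rightarrow> (nat \<Rightarrow> 'e set set) \<Rightarrow> ('e \<Rightarrow> real \<Rightarrow> real) \<Rightarrow> (nat \<Rightarrow> 'e set) \<Rightarrow> bool" where
  "is_PNE n Strat l S \<longleftrightarrow> is_profile n Strat S \<and>
     (\<forall>i\<in>{1..n}. \<forall>t\<in>Strat i. player_cost n l S i \<le> player_cost n l (S(i := t)) i)"

definition opt_cost :: "nat \<Rightarrow> (nat \<Rightarrow> 'e set set) \<Rightarrow> ('e \<Rightarrow> real \<Rightarrow> real) \<Rightarrow> real" where
  "opt_cost n Strat l = Min {social_cost n l S | S. is_profile n Strat S}"

definition PoS :: "nat \<Rightarrow> (nat \<Rightarrow> 'e set set) \<Rightarrow> ('e \<Rightarrow> real \<Rightarrow> real) \<Rightarrow> real" where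
  "PoS n Strat l = Min {social_cost n l S / opt_cost n Strat l | S. is_PNE n Strat l S}"

end

theory Submission
  imports Defs "HOL-Library.FuncSet"
begin

text \<open>
  Rosenthal's potential Phi(S) = (sum e. l_e(1) + ... + l_e(x_e)) is an exact potential,
  so a profile S minimizing Phi is a pure Nash equilibrium.  Let T be an optimal profile and
  x_e, y_e the loads of S and T.  For quadratic latencies with nonnegative coefficients we
  show, resource by resource and for all naturals x, y,
    x l(x) - rho y l(y) <= a (x l(x) - y l(x+1)) + b (Phi_l(x) - Phi_l(y))
  with a = 0.4535, b = 1.9085, rho = 2.362; by linearity in l this reduces to the monomials
  1, z, z^2, which are settled by explicit sum-of-squares certificates.  Summing over the
  resources, the Nash inequality SUM(S) <= (sum e. y_e l_e(x_e + 1)) and Phi(S) <= Phi(T)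
  make the right-hand side nonpositive, hence SUM(S) <= rho SUM(T) and PoS <= 2.362.
  The file first develops loads, the exact potential, double counting and existence of
  minimizers for general latencies, then the Nash inequality, then the polynomial
  inequality, and finally combines them.
\<close>

definition load :: "nat \<Rightarrow> (nat \<Rightarrow> 'e set) \<Rightarrow> 'e \<Rightarrow> nat" where
  "load n S e = card {i\<in>{1..n}. e \<in> S i}"

definition load_others :: "nat \<Rightarrow> (nat \<Rightarrow> 'e set) \<Rightarrow> nat \<Rightarrow> 'e \<Rightarrow> nat" where
  "load_others n S i e = card {j\<in>{1..n}. j \<noteq> i \<and> e \<in> S j}"

lemma congestion_load: "congestion n S e = real (load n S e)"
  by (simp add: congestion_def load_def)

lemma load_split:
  assumes "i \<in> {1..n}"
  shows "load n S e = load_others n S i e + (if e \<in> S i then 1 else 0)"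
proof -
  have "{j\<in>{1..n}. e \<in> S j}
      = {j\<in>{1..n}. j \<noteq> i \<and> e \<in> S j} \<union> (if e \<in> S i then {i} else {})"
    using assms by auto
  then show ?thesis unfolding load_def load_others_def by simp
qed

lemma load_others_update: "load_others n (S(i := t)) i e = load_others n S i e"
  unfolding load_others_def by (rule arg_cong[where f = card]) auto

lemma load_update:
  assumes "i \<in> {1..n}"
  shows "load n (S(i := t)) e = load_others n S i e + (if e \<in> t then 1 else 0)"
  using load_split[OF assms, of "S(i := t)"] by (simp add: load_others_update)

text \<open>Only the strategies of the players 1..n matter; profiles are total functions
  in Defs, so this is needed to pass to the finite set of restricted profiles.\<close>
lemma load_cong:
  assumes "\<And>i. i \<in> {1..n} \<Longrightarrow> S i = S' i"
  shows "load n S e = load n S' e"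
  unfolding load_def using assms by (metis (lifting) mem_Collect_eq)

lemma social_cost_cong:
  assumes "\<And>i. i \<in> {1..n} \<Longrightarrow> S i = S' i"
  shows "social_cost n l S = social_cost n l S'"
  unfolding social_cost_def player_cost_def congestion_load
  using assms load_cong[OF assms] by simp

definition pot :: "(real \<Rightarrow> real) \<Rightarrow> nat \<Rightarrow> real" where
  "pot f m = (\<Sum>k\<in>{1..m}. f (real k))"

lemma pot_Suc: "pot f (Suc m) = pot f m + f (real (Suc m))"
  by (simp add: pot_def)

definition rosenthal :: "nat \<Rightarrow> 'e set \<Rightarrow> ('e \<Rightarrow> real \<Rightarrow> real) \<Rightarrow> (nat \<Rightarrow> 'e set) \<Rightarrow> real" where
  "rosenthal n E l S = (\<Sum>e\<in>E. pot (l e) (load n S e))"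

lemma pot_load_update:
  assumes "i \<in> {1..n}"
  shows "pot f (load n (S(i := t)) e) - pot f (load n S e)
       = (if e \<in> t then f (real (load n (S(i := t)) e)) else 0)
       - (if e \<in> S i then f (real (load n S e)) else 0)"
  unfolding load_update[OF assms] load_split[OF assms, of S]
  by (cases "e \<in> t"; cases "e \<in> S i") (simp_all add: pot_Suc)

lemma sum_over_subset:
  assumes "finite E" "A \<subseteq> E"
  shows "(\<Sum>e\<in>E. if e \<in> A then g e else 0) = (\<Sum>e\<in>A. g e)"
  using sum.inter_restrict[OF assms(1), of g A] assms(2) by (simp add: Int_absorb1)

lemma rosenthal_update:
  assumes "finite E" "i \<in> {1..n}" "S i \<subseteq> E" "t \<subseteq> E"
  shows "rosenthal n E l (S(i := t)) - rosenthal n E l S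
       = player_cost n l (S(i := t)) i - player_cost n l S i"
proof -
  have "rosenthal n E l (S(i := t)) - rosenthal n E l S
      = (\<Sum>e\<in>E. if e \<in> t then l e (real (load n (S(i := t)) e)) else 0)
      - (\<Sum>e\<in>E. if e \<in> S i then l e (real (load n S e)) else 0)"
    unfolding rosenthal_def sum_subtractf[symmetric] pot_load_update[OF assms(2)] ..
  also have "\<dots> = (\<Sum>e\<in>t. l e (real (load n (S(i := t)) e))) - (\<Sum>e\<in>S i. l e (real (load n S e)))"
    using assms by (simp add: sum_over_subset)
  finally show ?thesis by (simp add: player_cost_def congestion_load)
qed

lemma sum_players_to_resources:
  assumes "finite E" "\<And>i. i \<in> {1..n} \<Longrightarrow> S i \<subseteq> E"
  shows "(\<Sum>i\<in>{1..n}. \<Sum>e\<in>S i. g e) = (\<Sum>e\<in>E. real (load n S e) * g e)"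
proof -
  have "(\<Sum>i\<in>{1..n}. \<Sum>e\<in>S i. g e) = (\<Sum>i\<in>{1..n}. \<Sum>e\<in>E. if e \<in> S i then g e else 0)"
    using assms by (simp add: sum_over_subset)
  also have "\<dots> = (\<Sum>e\<in>E. \<Sum>i\<in>{1..n}. if e \<in> S i then g e else 0)"
    by (rule sum.swap)
  also have "\<dots> = (\<Sum>e\<in>E. real (load n S e) * g e)"
    by (simp add: sum.If_cases load_def Int_def)
  finally show ?thesis .
qed

lemma social_cost_by_resources:
  assumes "finite E" "\<And>i. i \<in> {1..n} \<Longrightarrow> S i \<subseteq> E"
  shows "social_cost n l S = (\<Sum>e\<in>E. real (load n S e) * l e (real (load n S e)))"
  unfolding social_cost_def player_cost_def congestion_load
  using assms by (rule sum_players_to_resources)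

definition profiles :: "nat \<Rightarrow> (nat \<Rightarrow> 'e set set) \<Rightarrow> (nat \<Rightarrow> 'e set) set" where
  "profiles n Strat = Pi\<^sub>E {1..n} Strat"

lemma profile_strategy_subset:
  assumes "congestion_game n E Strat" "is_profile n Strat S" "i \<in> {1..n}"
  shows "S i \<subseteq> E"
  using assms unfolding congestion_game_def is_profile_def by blast

text \<open>Any quantity that depends on the players 1..n only takes finitely many (and at
  least one) values on profiles; this makes all the minima in Defs attained.\<close>
lemma profile_values_finite_nonempty:
  assumes "congestion_game n E Strat" and inv: "\<And>S. F (restrict S {1..n}) = F S"
  shows "finite {F S | S. is_profile n Strat S}" "{F S | S. is_profile n Strat S} \<noteq> {}"
proof -
  have "{F S | S. is_profile n Strat S} = F ` profiles n Strat"
  proof (intro equalityI subsetI)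
    fix v assume "v \<in> {F S | S. is_profile n Strat S}"
    then obtain S where "is_profile n Strat S" "v = F S" by blast
    then have "restrict S {1..n} \<in> profiles n Strat" "v = F (restrict S {1..n})"
      unfolding profiles_def is_profile_def by (simp add: restrict_PiE_iff, simp only: inv)
    then show "v \<in> F ` profiles n Strat" by blast
  next
    fix v assume "v \<in> F ` profiles n Strat"
    then show "v \<in> {F S | S. is_profile n Strat S}"
      unfolding profiles_def is_profile_def by (auto dest: PiE_mem)
  qed
  moreover have "finite (profiles n Strat)" "profiles n Strat \<noteq> {}"
    using assms(1) unfolding profiles_def congestion_game_def
    by (auto intro!: finite_PiE simp: PiE_eq_empty_iff)
  ultimately show "finite {F S | S. is_profile n Strat S}" "{F S | S. is_profile n Strat S} \<noteq> {}"
    by simp_all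
qed

lemma load_restrict: "load n (restrict S {1..n}) e = load n S e"
  by (rule load_cong) simp

lemma opt_cost_attained:
  assumes "congestion_game n E Strat"
  obtains S where "is_profile n Strat S" "social_cost n l S = opt_cost n Strat l"
proof -
  have "\<And>S. social_cost n l (restrict S {1..n}) = social_cost n l S"
    by (rule social_cost_cong) simp
  from profile_values_finite_nonempty[where F = "social_cost n l", OF assms this]
  have "opt_cost n Strat l \<in> {social_cost n l S | S. is_profile n Strat S}"
    unfolding opt_cost_def by (rule Min_in)
  then obtain S where "is_profile n Strat S" "opt_cost n Strat l = social_cost n l S"
    by blast
  then show ?thesis using that by simp
qed

lemma rosenthal_minimizer_exists:
  assumes "congestion_game n E Strat"
  obtains S where "is_profile n Strat S"
    "\<And>T. is_profile n Strat T \<Longrightarrow> rosenthal n E l S \<le> rosenthal n E l T"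
proof -
  let ?V = "{rosenthal n E l S | S. is_profile n Strat S}"
  have "\<And>S. rosenthal n E l (restrict S {1..n}) = rosenthal n E l S"
    unfolding rosenthal_def load_restrict ..
  note fin = profile_values_finite_nonempty[where F = "rosenthal n E l", OF assms this]
  obtain S where "is_profile n Strat S" "Min ?V = rosenthal n E l S"
    using Min_in[OF fin] by blast
  moreover have "Min ?V \<le> rosenthal n E l T" if "is_profile n Strat T" for T
    using fin(1) that by (auto intro: Min_le)
  ultimately show ?thesis using that by simp
qed

lemma rosenthal_minimizer_is_PNE:
  assumes cg: "congestion_game n E Strat" and S: "is_profile n Strat S"
    and min: "\<And>T. is_profile n Strat T \<Longrightarrow> rosenthal n E l S \<le> rosenthal n E l T"
  shows "is_PNE n Strat l S"
  unfolding is_PNE_def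
proof (intro conjI ballI S)
  fix i t assume i: "i \<in> {1..n}" and t: "t \<in> Strat i"
  have T: "is_profile n Strat (S(i := t))" using S t unfolding is_profile_def by simp
  have "finite E" using cg unfolding congestion_game_def by simp
  moreover have "S i \<subseteq> E" "t \<subseteq> E"
    using profile_strategy_subset[OF cg S i] profile_strategy_subset[OF cg T i] by simp_all
  ultimately have "rosenthal n E l (S(i := t)) - rosenthal n E l S
      = player_cost n l (S(i := t)) i - player_cost n l S i"
    using i rosenthal_update by blast
  with min[OF T] show "player_cost n l S i \<le> player_cost n l (S(i := t)) i" by linarith
qed

lemma quadratic_latency_coeffs:
  assumes "quadratic_latencies E l" "e \<in> E"
  obtains a0 a1 a2 where "a0 \<ge> 0" "a1 \<ge> 0" "a2 \<ge> 0"
    "\<And>z. z \<ge> 0 \<Longrightarrow> l e z = a0 + a1 * z + a2 * z^2"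
proof -
  from assms obtain a0 a1 a2 where "a0 \<ge> 0" "a1 \<ge> 0" "a2 \<ge> 0"
    "\<forall>z\<ge>0. l e z = a0 + a1 * z + a2 * z^2"
    unfolding quadratic_latencies_def by blast
  then show ?thesis using that by simp
qed

lemma quadratic_latency_nonneg:
  assumes "quadratic_latencies E l" "e \<in> E" "u \<ge> 0"
  shows "l e u \<ge> 0"
proof -
  obtain a0 a1 a2 where "a0 \<ge> 0" "a1 \<ge> 0" "a2 \<ge> 0"
    and "\<And>z. z \<ge> 0 \<Longrightarrow> l e z = a0 + a1 * z + a2 * z^2"
    using quadratic_latency_coeffs[OF assms(1,2)] by blast
  then show ?thesis using assms(3) by simp
qed

lemma quadratic_latency_mono:
  assumes "quadratic_latencies E l" "e \<in> E" "0 \<le> u" "u \<le> v"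
  shows "l e u \<le> l e v"
proof -
  obtain a0 a1 a2 where a: "a0 \<ge> 0" "a1 \<ge> 0" "a2 \<ge> 0"
    and l: "\<And>z. z \<ge> 0 \<Longrightarrow> l e z = a0 + a1 * z + a2 * z^2"
    using quadratic_latency_coeffs[OF assms(1,2)] by blast
  have "a0 + a1 * u + a2 * u^2 \<le> a0 + a1 * v + a2 * v^2"
    using a assms(3,4) by (intro add_mono mult_left_mono power_mono) auto
  then show ?thesis using l assms(3,4) by simp
qed

lemma social_cost_nonneg:
  assumes "congestion_game n E Strat" "quadratic_latencies E l" "is_profile n Strat S"
  shows "social_cost n l S \<ge> 0"
  unfolding social_cost_def player_cost_def
proof (intro sum_nonneg)
  fix i e assume "i \<in> {1..n}" "e \<in> S i"
  then have "e \<in> E" using profile_strategy_subset[OF assms(1,3)] by blast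
  then show "0 \<le> l e (congestion n S e)"
    using quadratic_latency_nonneg[OF assms(2)] by (simp add: congestion_load)
qed

text \<open>The Nash inequality for nondecreasing latencies: in a PNE S, comparing each
  player's cost with a deviation to its strategy in T gives
  SUM(S) <= (sum e. y_e * l_e(x_e + 1)), where x and y are the loads of S and T.\<close>
lemma nash_social_bound:
  assumes cg: "congestion_game n E Strat"
    and mono: "\<And>e u v. e \<in> E \<Longrightarrow> 0 \<le> u \<Longrightarrow> u \<le> v \<Longrightarrow> l e u \<le> l e v"
    and S: "is_PNE n Strat l S" and T: "is_profile n Strat T"
  shows "social_cost n l S \<le> (\<Sum>e\<in>E. real (load n T e) * l e (real (load n S e) + 1))"
proof -
  have deviation: "player_cost n l S i \<le> (\<Sum>e\<in>T i. l e (real (load n S e) + 1))"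
    if i: "i \<in> {1..n}" for i
  proof -
    have "player_cost n l S i \<le> player_cost n l (S(i := T i)) i"
      using S T i unfolding is_PNE_def is_profile_def by blast
    also have "\<dots> = (\<Sum>e\<in>T i. l e (real (load n (S(i := T i)) e)))"
      by (simp add: player_cost_def congestion_load)
    also have "\<dots> \<le> (\<Sum>e\<in>T i. l e (real (load n S e) + 1))"
    proof (rule sum_mono)
      fix e assume "e \<in> T i"
      then have "e \<in> E" using profile_strategy_subset[OF cg T i] by blast
      moreover have "load n (S(i := T i)) e \<le> load n S e + 1"
        unfolding load_update[OF i] load_split[OF i, of S] by simp
      ultimately show "l e (real (load n (S(i := T i)) e)) \<le> l e (real (load n S e) + 1)"
        by (intro mono) auto
    qed
    finally show ?thesis .
  qed
  have "social_cost n l S \<le> (\<Sum>i\<in>{1..n}. \<Sum>e\<in>T i. l e (real (load n S e) + 1))"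
    unfolding social_cost_def by (rule sum_mono) (rule deviation)
  also have "\<dots> = (\<Sum>e\<in>E. real (load n T e) * l e (real (load n S e) + 1))"
    using cg profile_strategy_subset[OF cg T]
    by (intro sum_players_to_resources) (auto simp: congestion_game_def)
  finally show ?thesis .
qed

text \<open>The multipliers of the Nash inequality and of the potential inequality, and the
  resulting bound on the price of stability.\<close>
definition nash_weight :: real where "nash_weight = 4535/10000"

definition potential_weight :: real where "potential_weight = 19085/10000"

definition pos_bound :: real where "pos_bound = 2362/1000"

text \<open>Per-resource defect of the combined inequality for load x under S and y under T.
  The theorem reduces to defect f x y <= 0 for every quadratic latency f.\<close>
definition defect :: "(real \<Rightarrow> real) \<Rightarrow> nat \<Rightarrow> nat \<Rightarrow> real" where
  "defect f x y = real x * f (real x) - pos_bound * (real y * f (real y))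
     - nash_weight * (real x * f (real x) - real y * f (real x + 1))
     - potential_weight * (pot f x - pot f y)"

lemma pot_const: "pot (\<lambda>_. 1) m = real m"
  by (simp add: pot_def)

lemma pot_id: "pot (\<lambda>z. z) m = real m * (real m + 1) / 2"
  by (induction m) (simp_all add: pot_def field_simps)

lemma pot_square: "pot (\<lambda>z. z^2) m = real m * (real m + 1) * (2 * real m + 1) / 6"
  by (induction m) (simp_all add: pot_def field_simps power2_eq_square)

text \<open>The defect is linear in the latency function, so it suffices to treat monomials.\<close>
lemma defect_quadratic:
  "defect (\<lambda>z. a0 + a1 * z + a2 * z^2) x y
     = a0 * defect (\<lambda>_. 1) x y + a1 * defect (\<lambda>z. z) x y + a2 * defect (\<lambda>z. z^2) x y"
  unfolding defect_def pot_def by (simp add: sum.distrib sum_distrib_left algebra_simps)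

lemma defect_cong:
  assumes "\<And>z. z \<ge> 0 \<Longrightarrow> f z = g z"
  shows "defect f x y = defect g x y"
proof -
  have "pot f m = pot g m" for m unfolding pot_def using assms by simp
  then show ?thesis unfolding defect_def using assms by simp
qed

text \<open>For the constant monomial the defect is (1 - a - b) x + (a + b - rho) y <= 0.\<close>
lemma const_defect_nonpos: "defect (\<lambda>_. 1) x y \<le> 0"
  unfolding defect_def pot_const nash_weight_def potential_weight_def pos_bound_def
  by (simp add: field_simps)

text \<open>Every pair of naturals is of one of three shapes; the certificates below are sums
  of manifestly nonnegative terms in the shifted variables p, q >= 0.\<close>
lemma nat_pair_shapes:
  fixes x y :: nat
  obtains (y_zero) "y = 0"
    | (x_zero) q where "x = 0" "real y = q + 1" "q \<ge> 0"
    | (both_pos) p q where "real x = p + 1" "real y = q + 1" "p \<ge> 0" "q \<ge> 0"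
proof (cases "y = 0")
  case False
  then have y: "real y = (real y - 1) + 1" "real y - 1 \<ge> 0" by auto
  show ?thesis
  proof (cases "x = 0")
    case True then show ?thesis using x_zero y by blast
  next
    case False
    then have "real x = (real x - 1) + 1" "real x - 1 \<ge> 0" by auto
    then show ?thesis using both_pos y by blast
  qed
qed (rule y_zero)

lemma linear_defect_nonpos: "defect (\<lambda>z. z) x y \<le> 0"
proof (cases rule: nat_pair_shapes[where x=x and y=y])
  case y_zero
  have "- defect (\<lambda>z. z) x y = 1631/4000 * real x ^ 2 + 3817/4000 * real x"
    unfolding defect_def pot_id y_zero nash_weight_def potential_weight_def pos_bound_def
    by (simp add: field_simps power2_eq_square)
  moreover have "0 \<le> 1631/4000 * real x ^ 2 + 3817/4000 * real x" by simp
  ultimately show ?thesis by linarith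
next
  case (x_zero q)
  have "- defect (\<lambda>z. z) x y = 5631/4000 * q^2 + 5631/4000 * q"
    unfolding defect_def pot_id x_zero nash_weight_def potential_weight_def pos_bound_def
    by (simp add: field_simps power2_eq_square)
  moreover have "0 \<le> 5631/4000 * q^2 + 5631/4000 * q" using x_zero by simp
  ultimately show ?thesis by linarith
next
  case (both_pos p q)
  have "- defect (\<lambda>z. z) x y
      = 1631/4000 * (p - 907/1631 * q)^2 + 1045189/815500 * q^2
        + 3817/4000 * q + 1817/2000 + 1053/800 * p"
    unfolding defect_def pot_id both_pos nash_weight_def potential_weight_def pos_bound_def
    by (simp add: field_simps power2_eq_square)
  moreover have "0 \<le> 1631/4000 * (p - 907/1631 * q)^2 + 1045189/815500 * q^2
        + 3817/4000 * q + 1817/2000 + 1053/800 * p"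
    using both_pos by (intro add_nonneg_nonneg mult_nonneg_nonneg) auto
  ultimately show ?thesis by linarith
qed

lemma square_defect_nonpos: "defect (\<lambda>z. z^2) x y \<le> 0"
proof (cases rule: nat_pair_shapes[where x=x and y=y])
  case y_zero
  have "- defect (\<lambda>z. z^2) x y = 269/3000 * real x ^ 3 + 3817/4000 * real x ^ 2 + 3817/12000 * real x"
    unfolding defect_def pot_square y_zero nash_weight_def potential_weight_def pos_bound_def
    by (simp add: field_simps power2_eq_square power3_eq_cube)
  moreover have "0 \<le> 269/3000 * real x ^ 3 + 3817/4000 * real x ^ 2 + 3817/12000 * real x" by simp
  ultimately show ?thesis by linarith
next
  case (x_zero q)
  have "- defect (\<lambda>z. z^2) x y = 2071/1200 * q^3 + 16893/4000 * q^2 + 29969/12000 * q"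
    unfolding defect_def pot_square x_zero nash_weight_def potential_weight_def pos_bound_def
    by (simp add: field_simps power2_eq_square power3_eq_cube)
  moreover have "0 \<le> 2071/1200 * q^3 + 16893/4000 * q^2 + 29969/12000 * q" using x_zero by simp
  ultimately show ?thesis by linarith
next
  case (both_pos p q)
  have "- defect (\<lambda>z. z^2) x y
      = (p - 843/250 * q)^2 * (269/3000 * p + 37803/250000 * q) + 14331/62500000 * p * q^2
        + 304445059/46875000000 * q^3 + 3079/4000 * (p - 3628/3079 * q)^2
        + 38851163/12316000 * q^2 + 13643/12000 * q + 8179/12000 * p + 3/2000"
    unfolding defect_def pot_square both_pos nash_weight_def potential_weight_def pos_bound_def
    by (simp add: field_simps power2_eq_square power3_eq_cube)
  moreover have "0 \<le> (p - 843/250 * q)^2 * (269/3000 * p + 37803/250000 * q) + 14331/62500000 * p * q^2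
        + 304445059/46875000000 * q^3 + 3079/4000 * (p - 3628/3079 * q)^2
        + 38851163/12316000 * q^2 + 13643/12000 * q + 8179/12000 * p + 3/2000"
    using both_pos by (intro add_nonneg_nonneg mult_nonneg_nonneg) auto
  ultimately show ?thesis by linarith
qed

lemma quadratic_defect_nonpos:
  assumes "a0 \<ge> 0" "a1 \<ge> 0" "a2 \<ge> 0" "\<And>z. z \<ge> 0 \<Longrightarrow> f z = a0 + a1 * z + a2 * z^2"
  shows "defect f x y \<le> 0"
proof -
  have "defect f x y = defect (\<lambda>z. a0 + a1 * z + a2 * z^2) x y"
    using assms(4) by (rule defect_cong)
  also have "\<dots> = a0 * defect (\<lambda>_. 1) x y + a1 * defect (\<lambda>z. z) x y + a2 * defect (\<lambda>z. z^2) x y"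
    by (rule defect_quadratic)
  also have "\<dots> \<le> 0"
    using assms(1-3) const_defect_nonpos linear_defect_nonpos square_defect_nonpos
    by (intro add_nonpos_nonpos mult_nonneg_nonpos)
  finally show ?thesis .
qed

text \<open>Main estimate: summing the per-resource inequality, the Nash inequality and the
  minimality of the potential give SUM(S) <= rho * SUM(T) for the potential minimizer S.\<close>
lemma rosenthal_minimizer_bound:
  assumes cg: "congestion_game n E Strat" and lat: "quadratic_latencies E l"
    and S: "is_profile n Strat S"
    and min: "\<And>T. is_profile n Strat T \<Longrightarrow> rosenthal n E l S \<le> rosenthal n E l T"
    and T: "is_profile n Strat T"
  shows "social_cost n l S \<le> pos_bound * social_cost n l T"
proof -
  have finE: "finite E" using cg unfolding congestion_game_def by simp
  define N where "N = (\<Sum>e\<in>E. real (load n T e) * l e (real (load n S e) + 1))"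
  have by_resources: "social_cost n l U = (\<Sum>e\<in>E. real (load n U e) * l e (real (load n U e)))"
    if "is_profile n Strat U" for U
    using finE profile_strategy_subset[OF cg that] by (rule social_cost_by_resources)
  have "(\<Sum>e\<in>E. defect (l e) (load n S e) (load n T e))
      = social_cost n l S - pos_bound * social_cost n l T
        - nash_weight * (social_cost n l S - N)
        - potential_weight * (rosenthal n E l S - rosenthal n E l T)"
    unfolding defect_def N_def rosenthal_def by_resources[OF S] by_resources[OF T]
    by (simp add: right_diff_distrib sum_subtractf sum_distrib_left)
  moreover have "(\<Sum>e\<in>E. defect (l e) (load n S e) (load n T e)) \<le> 0"
  proof (rule sum_nonpos)
    fix e assume "e \<in> E"
    then obtain a0 a1 a2 where "a0 \<ge> 0" "a1 \<ge> 0" "a2 \<ge> 0"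
      "\<And>z. z \<ge> 0 \<Longrightarrow> l e z = a0 + a1 * z + a2 * z^2"
      using quadratic_latency_coeffs[OF lat] by blast
    then show "defect (l e) (load n S e) (load n T e) \<le> 0"
      by (rule quadratic_defect_nonpos)
  qed
  moreover have "nash_weight * (social_cost n l S - N) \<le> 0"
    using nash_social_bound[OF cg quadratic_latency_mono[OF lat] rosenthal_minimizer_is_PNE[OF cg S min] T]
    unfolding N_def nash_weight_def by simp
  moreover have "potential_weight * (rosenthal n E l S - rosenthal n E l T) \<le> 0"
    using min[OF T] unfolding potential_weight_def by simp
  ultimately show ?thesis by linarith
qed

lemma PoS_le_PNE_ratio:
  assumes "congestion_game n E Strat" "is_PNE n Strat l S"
  shows "PoS n Strat l \<le> social_cost n l S / opt_cost n Strat l"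
proof -
  let ?ratio = "\<lambda>S. social_cost n l S / opt_cost n Strat l"
  have "\<And>S. social_cost n l (restrict S {1..n}) = social_cost n l S"
    by (rule social_cost_cong) simp
  then have "\<And>S. ?ratio (restrict S {1..n}) = ?ratio S" by simp
  then have "finite {?ratio S | S. is_profile n Strat S}"
    by (rule profile_values_finite_nonempty[OF assms(1)])
  moreover have "{?ratio S | S. is_PNE n Strat l S} \<subseteq> {?ratio S | S. is_profile n Strat S}"
    unfolding is_PNE_def by blast
  ultimately have "finite {?ratio S | S. is_PNE n Strat l S}" by (rule finite_subset[rotated])
  then show ?thesis unfolding PoS_def using assms(2) by (auto intro: Min_le)
qed

lemma ratio_le:
  fixes a b r :: real
  assumes "0 \<le> a" "a \<le> r * b" "0 \<le> r"
  shows "a / b \<le> r"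
proof (cases "b > 0")
  case True
  then show ?thesis using assms(2) by (simp add: divide_le_eq mult.commute)
next
  case False
  then have "a / b \<le> 0" using assms(1) by (simp add: divide_nonneg_nonpos)
  then show ?thesis using assms(3) by linarith
qed

theorem mainTheorem9:
  fixes n :: nat and E :: "'e set" and Strat :: "nat \<Rightarrow> 'e set set"
    and l :: "'e \<Rightarrow> real \<Rightarrow> real"
  assumes "congestion_game n E Strat"
    and "quadratic_latencies E l"
  shows "PoS n Strat l \<le> 2.362"
proof -
  obtain S where S: "is_profile n Strat S"
    and min: "\<And>T. is_profile n Strat T \<Longrightarrow> rosenthal n E l S \<le> rosenthal n E l T"
    using rosenthal_minimizer_exists[OF assms(1)] by blast
  obtain Sopt where Sopt: "is_profile n Strat Sopt" "social_cost n l Sopt = opt_cost n Strat l"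
    using opt_cost_attained[OF assms(1)] by blast
  have "social_cost n l S \<le> pos_bound * opt_cost n Strat l"
    using rosenthal_minimizer_bound[OF assms S min Sopt(1)] Sopt(2) by simp
  then have "social_cost n l S / opt_cost n Strat l \<le> pos_bound"
    using social_cost_nonneg[OF assms S] by (intro ratio_le) (simp_all add: pos_bound_def)
  moreover have "PoS n Strat l \<le> social_cost n l S / opt_cost n Strat l"
    using PoS_le_PNE_ratio[OF assms(1) rosenthal_minimizer_is_PNE[OF assms(1) S min]] .
  moreover have "pos_bound = 2.362" by (simp add: pos_bound_def)
  ultimately show ?thesis by linarith
qed

end
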